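(* Let $U\subset\mathbb S^2$ be open, let $(F^{ij})$ be a symmetric $2$-tensor field in $C^1(U)$ satisfying $\lambda|\xi|^2\le F^{ij}\xi_i\xi_j\le\Lambda|\xi|^2$ on $U$ for constants $\Lambda\ge\lambda>0$, and let $u\in C^3(U)$ satisfy $F^{ij}(u_{ij}+u\delta_{ij})=0$ in $U$. Then there are constants $C_1,C_2$ depending only on the $C^1$-norm of $F^{ij}$ (and on $\lambda,\Lambda$) such that, for every unit vector $E\in\mathbb R^3$, $$F^{ij}(\rho_u)_{ij}\ge-C_1|\nabla\rho_u|,\qquad F^{ij}(\phi_E)_{ij}\ge-C_2|\nabla\phi_E|\quad\text{in }U.$$
   Context: For $u\in C^1(\mathbb S^2)$ and a local orthonormal frame $e_1,e_2$ on $\mathbb S^2$, define the vector field $X_u(x)=\sum_{i=1}^2u_i(x)e_i+u(x)\,x\in\mathbb R^3$ (here $x$ is the position vector, i.e. the unit normal of $\mathbb S^2$ at $x$). For a unit vector $E\in\mathbb R^3$ set $\phi_E(x)=\langle E,X_u(x)\rangle$ and $\rho_u(x)=|X_u(x)|^2$, with $\langle\cdot,\cdot\rangle$ the Euclidean inner product. Subscripts denote covariant derivatives on $\mathbb S^2$. *)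

theory Defs
  imports "HOL-Analysis.Analysis"
begin

text \<open>Functions on the unit sphere S^2 are represented as functions real^3 => real whose
values matter only on the sphere. They are extended 0-homogeneously to the punctured space;
ambient derivatives of this extension, taken at points of the sphere, give the tangential
gradient and (on tangent vectors) the covariant Hessian of the sphere.\<close>

definition sph_ext :: "(real^3 \<Rightarrow> real) \<Rightarrow> real^3 \<Rightarrow> real" where
  "sph_ext f y = f ((1 / norm y) *\<^sub>R y)"

definition pderiv3 :: "(real^3 \<Rightarrow> real) \<Rightarrow> 3 \<Rightarrow> real^3 \<Rightarrow> real" where
  "pderiv3 f i y = frechet_derivative f (at y) (axis i 1)"

definition grad3 :: "(real^3 \<Rightarrow> real) \<Rightarrow> real^3 \<Rightarrow> real^3" where
  "grad3 f y = (\<chi> i. pderiv3 f i y)"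

definition hess3 :: "(real^3 \<Rightarrow> real) \<Rightarrow> real^3 \<Rightarrow> real^3^3" where
  "hess3 f y = (\<chi> i j. pderiv3 (pderiv3 f j) i y)"

definition sgrad :: "(real^3 \<Rightarrow> real) \<Rightarrow> real^3 \<Rightarrow> real^3" where
  "sgrad f x = grad3 (sph_ext f) x"

definition shess :: "(real^3 \<Rightarrow> real) \<Rightarrow> real^3 \<Rightarrow> real^3^3" where
  "shess f x = hess3 (sph_ext f) x"

fun Ck_on :: "nat \<Rightarrow> (real^3 \<Rightarrow> real) \<Rightarrow> (real^3) set \<Rightarrow> bool" where
  "Ck_on 0 f S = continuous_on S f"
| "Ck_on (Suc k) f S = (f differentiable_on S \<and> (\<forall>i. Ck_on k (pderiv3 f i) S))"

definition cone3 :: "(real^3) set \<Rightarrow> (real^3) set" where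
  "cone3 U = {y. y \<noteq> 0 \<and> (1 / norm y) *\<^sub>R y \<in> U}"

definition sph_Ck :: "nat \<Rightarrow> (real^3 \<Rightarrow> real) \<Rightarrow> (real^3) set \<Rightarrow> bool" where
  "sph_Ck k f U = Ck_on k (sph_ext f) (cone3 U)"

definition Xu :: "(real^3 \<Rightarrow> real) \<Rightarrow> real^3 \<Rightarrow> real^3" where
  "Xu u x = sgrad u x + u x *\<^sub>R x"

definition rho_u :: "(real^3 \<Rightarrow> real) \<Rightarrow> real^3 \<Rightarrow> real" where
  "rho_u u x = (norm (Xu u x))\<^sup>2"

definition phi_E :: "real^3 \<Rightarrow> (real^3 \<Rightarrow> real) \<Rightarrow> real^3 \<Rightarrow> real" where
  "phi_E E u x = E \<bullet> Xu u x"

text \<open>F^{ij} f_{ij} for a tangential symmetric 2-tensor A (A x x = 0), as a trace.\<close>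
definition Fop :: "(real^3 \<Rightarrow> real^3^3) \<Rightarrow> (real^3 \<Rightarrow> real) \<Rightarrow> real^3 \<Rightarrow> real" where
  "Fop A f x = trace (A x ** shess f x)"

end

theory Submission
  imports Defs
begin

text \<open>
  Let v(y) = |y| u(y/|y|) be the 1-homogeneous extension of u. Its gradient is X_u, extended
  0-homogeneously, so at x in U the Hessian H = D^2 v(x) is symmetric with H x = 0, the
  spherical gradients are grad phi_E = H E and grad rho_u = 2 H X_u, and the equation reads
  tr (A H) = 0. By homogeneity this identity holds on the whole cone over U, so it may be
  differentiated; together with the symmetry of the third derivatives of v this gives
    F^ij (phi_E)_ij = - sum_ik (E . grad A_ik) H_ki,
    F^ij (rho_u)_ij = - 2 sum_ik (X_u . grad A_ik) H_ki + 2 sum_m (H e_m) . A (H e_m),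
  and the last sum is nonnegative by ellipticity. The gradients of the 0-homogeneous A_ik are
  tangent, so it remains to bound every entry of H by C |H e| for a unit tangent vector e.
  In the tangent frame (e, x \<times> e) the restriction of H is [[p, q], [q, r]] with |p|, |q| \<le> |H e|,
  and tr (A H) = 0 together with ellipticity yields lam |r| \<le> Lam (|p| + |q|).
\<close>

section \<open>Partial derivatives\<close>

lemma pderiv3_eq: "(f has_derivative f') (at y) \<Longrightarrow> pderiv3 f i y = f' (axis i 1)"
  unfolding pderiv3_def by (metis frechet_derivative_at)

lemma pderiv3_cong:
  assumes "open S" "y \<in> S" "\<And>z. z \<in> S \<Longrightarrow> f z = h z"
  shows "pderiv3 f i y = pderiv3 h i y"
proof -
  have "(f has_derivative f') (at y) \<longleftrightarrow> (h has_derivative f') (at y)" for f'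
  proof
    show "(h has_derivative f') (at y)" if "(f has_derivative f') (at y)"
      using that by (rule has_derivative_transform_within_open[OF _ assms(1,2)]) (simp add: assms(3))
    show "(f has_derivative f') (at y)" if "(h has_derivative f') (at y)"
      using that by (rule has_derivative_transform_within_open[OF _ assms(1,2)]) (simp add: assms(3))
  qed
  then show ?thesis unfolding pderiv3_def frechet_derivative_def by simp
qed

lemma pderiv3_add:
  assumes "f differentiable at y" "h differentiable at y"
  shows "pderiv3 (\<lambda>z. f z + h z) i y = pderiv3 f i y + pderiv3 h i y"
  using pderiv3_eq[OF has_derivative_add[OF assms[unfolded frechet_derivative_works]]]
  unfolding pderiv3_def .

lemma pderiv3_diff:
  assumes "f differentiable at y" "h differentiable at y"
  shows "pderiv3 (\<lambda>z. f z - h z) i y = pderiv3 f i y - pderiv3 h i y"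
  using pderiv3_eq[OF has_derivative_diff[OF assms[unfolded frechet_derivative_works]]]
  unfolding pderiv3_def .

lemma pderiv3_mult:
  assumes "f differentiable at y" "h differentiable at y"
  shows "pderiv3 (\<lambda>z. f z * h z) i y = pderiv3 f i y * h y + f y * pderiv3 h i y"
  using pderiv3_eq[OF has_derivative_mult[OF assms[unfolded frechet_derivative_works]]]
  unfolding pderiv3_def by simp

lemma pderiv3_sum:
  assumes "\<And>k. f k differentiable at y"
  shows "pderiv3 (\<lambda>z. \<Sum>k\<in>(UNIV::'a::finite set). f k z) i y = (\<Sum>k\<in>UNIV. pderiv3 (f k) i y)"
  using pderiv3_eq[OF has_derivative_sum[OF assms[unfolded frechet_derivative_works]]]
  unfolding pderiv3_def .

lemma pderiv3_const: "pderiv3 (\<lambda>z. c) i y = 0"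
  by (simp add: pderiv3_def)

lemma pderiv3_cmult:
  "f differentiable at y \<Longrightarrow> pderiv3 (\<lambda>z. c * f z) i y = c * pderiv3 f i y"
  using pderiv3_mult[of "\<lambda>z. c" y f i] by (simp add: pderiv3_const)

lemma pderiv3_component: "pderiv3 (\<lambda>z::real^3. z $ j) i y = (if i = j then 1 else 0)"
  using pderiv3_eq[OF bounded_linear_imp_has_derivative[OF bounded_linear_vec_nth]]
  by (fastforce simp: axis_def)

lemma pderiv3_norm:
  "y \<noteq> 0 \<Longrightarrow> pderiv3 (\<lambda>z::real^3. norm z) i y = y $ i * (1 / norm y)"
  using pderiv3_eq[OF has_derivative_norm] by (simp add: sgn_div_norm inner_axis' field_simps)

lemma pderiv3_inverse_norm:
  assumes "y \<noteq> 0"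
  shows "pderiv3 (\<lambda>z::real^3. 1 / norm z) i y = - y $ i * (1 / norm y * (1 / norm y) * (1 / norm y))"
proof -
  have "((\<lambda>z::real^3. 1 / norm z) has_derivative
     (\<lambda>h. - 1 * (inverse (norm y) * (h \<bullet> sgn y) * inverse (norm y)) + 0 / norm y)) (at y)"
    using assms by (intro has_derivative_divide has_derivative_const has_derivative_norm) simp_all
  then show ?thesis
    by (simp add: pderiv3_eq sgn_div_norm inner_axis' divide_inverse)
qed

lemma differentiable_inverse_norm: "y \<noteq> 0 \<Longrightarrow> (\<lambda>z::real^3. 1 / norm z) differentiable at y"
  by (intro differentiable_divide differentiable_norm_at) auto

lemma frechet_derivative_eq_sum_pderiv3:
  fixes f :: "real^3 \<Rightarrow> real"
  assumes "f differentiable at y"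
  shows "frechet_derivative f (at y) w = (\<Sum>i\<in>UNIV. w$i * pderiv3 f i y)"
proof -
  have lin: "linear (frechet_derivative f (at y))"
    using assms by (rule linear_frechet_derivative)
  have "w = (\<Sum>i\<in>UNIV. w$i *\<^sub>R axis i (1::real))"
    using basis_expansion[of w] by (simp add: scalar_mult_eq_scaleR)
  then have "frechet_derivative f (at y) w = (\<Sum>i\<in>UNIV. frechet_derivative f (at y) (w$i *\<^sub>R axis i 1))"
    by (metis linear_sum[OF lin])
  also have "\<dots> = (\<Sum>i\<in>UNIV. w$i * pderiv3 f i y)"
    unfolding pderiv3_def using linear_cmul[OF lin] by simp
  finally show ?thesis .
qed

lemma has_derivative_along_axis:
  fixes g :: "real^3 \<Rightarrow> real"
  assumes "g differentiable at (z + s *\<^sub>R axis k 1)"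
  shows "((\<lambda>t. g (z + t *\<^sub>R axis k 1)) has_derivative (\<lambda>d. d * pderiv3 g k (z + s *\<^sub>R axis k 1))) (at s)"
proof -
  let ?F = "frechet_derivative g (at (z + s *\<^sub>R axis k 1))"
  have "((\<lambda>t. z + t *\<^sub>R axis k (1::real)) has_derivative (\<lambda>d. d *\<^sub>R axis k 1)) (at s)"
    by (auto intro!: derivative_eq_intros)
  from has_derivative_compose[OF this assms[unfolded frechet_derivative_works]]
  have "((\<lambda>t. g (z + t *\<^sub>R axis k 1)) has_derivative (\<lambda>d. ?F (d *\<^sub>R axis k 1))) (at s)"
    by (simp add: o_def)
  moreover have "?F (d *\<^sub>R axis k 1) = d * pderiv3 g k (z + s *\<^sub>R axis k 1)" for d
    unfolding pderiv3_def using linear_cmul[OF linear_frechet_derivative[OF assms]] by simp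
  ultimately show ?thesis by simp
qed

section \<open>Functions of class \<open>C\<^sup>k\<close>\<close>

lemma differentiable_on_cong_open:
  assumes "open S" "\<And>z. z \<in> S \<Longrightarrow> f z = h z"
  shows "f differentiable_on S \<longleftrightarrow> h differentiable_on S"
proof -
  have transfer: "g differentiable at y"
    if "k differentiable at y" "y \<in> S" "\<And>z. z \<in> S \<Longrightarrow> k z = g z" for k g y
    using that has_derivative_transform_within_open[OF _ assms(1)] unfolding differentiable_def by blast
  show ?thesis
    unfolding differentiable_on_eq_differentiable_at[OF assms(1)]
    using transfer[of f _ h] transfer[of h _ f] assms(2) by metis
qed

lemma Ck_on_cong:
  assumes "open S" "\<And>z. z \<in> S \<Longrightarrow> f z = h z"
  shows "Ck_on k f S = Ck_on k h S"
  using assms(2)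
proof (induction k arbitrary: f h)
  case 0
  then show ?case using continuous_on_cong by auto
next
  case (Suc k)
  have "Ck_on k (pderiv3 f i) S = Ck_on k (pderiv3 h i) S" for i
    by (rule Suc.IH) (use pderiv3_cong[OF assms(1)] Suc.prems in blast)
  moreover have "f differentiable_on S \<longleftrightarrow> h differentiable_on S"
    by (rule differentiable_on_cong_open[OF assms(1) Suc.prems])
  ultimately show ?case by simp
qed

lemma Ck_on_SucD: "Ck_on (Suc k) f S \<Longrightarrow> Ck_on k f S"
  by (induction k arbitrary: f) (simp_all add: differentiable_imp_continuous_on)

lemma Ck_on_differentiable_at:
  "Ck_on (Suc k) f S \<Longrightarrow> open S \<Longrightarrow> y \<in> S \<Longrightarrow> f differentiable at y"
  using differentiable_on_eq_differentiable_at by auto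

lemma Ck_on_const: "Ck_on k (\<lambda>z. c) S"
proof (induction k arbitrary: c)
  case (Suc k)
  have "pderiv3 (\<lambda>z. c) i = (\<lambda>z. 0)" for i by (simp add: fun_eq_iff pderiv3_const)
  then show ?case using Suc.IH[of 0] by simp
qed simp

lemma Ck_on_add:
  assumes "open S"
  shows "Ck_on k f S \<Longrightarrow> Ck_on k h S \<Longrightarrow> Ck_on k (\<lambda>z. f z + h z) S"
proof (induction k arbitrary: f h)
  case 0
  then show ?case by (simp add: continuous_on_add)
next
  case (Suc k)
  have "Ck_on k (pderiv3 (\<lambda>z. f z + h z) i) S" for i
  proof -
    have "pderiv3 (\<lambda>z. f z + h z) i z = pderiv3 f i z + pderiv3 h i z" if "z \<in> S" for z
      using Suc.prems Ck_on_differentiable_at[OF _ assms that] by (intro pderiv3_add) blast+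
    from Ck_on_cong[OF assms this] show ?thesis
      using Suc.IH Suc.prems by simp
  qed
  then show ?case using Suc.prems by (simp add: differentiable_on_add)
qed

lemma Ck_on_mult:
  assumes "open S"
  shows "Ck_on k f S \<Longrightarrow> Ck_on k h S \<Longrightarrow> Ck_on k (\<lambda>z. f z * h z) S"
proof (induction k arbitrary: f h)
  case 0
  then show ?case by (simp add: continuous_on_mult)
next
  case (Suc k)
  have "Ck_on k (pderiv3 (\<lambda>z. f z * h z) i) S" for i
  proof -
    have "pderiv3 (\<lambda>z. f z * h z) i z = pderiv3 f i z * h z + f z * pderiv3 h i z" if "z \<in> S" for z
      using Suc.prems Ck_on_differentiable_at[OF _ assms that] by (intro pderiv3_mult) blast+
    moreover have "Ck_on k (\<lambda>z. pderiv3 f i z * h z + f z * pderiv3 h i z) S"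
      using Suc.prems Ck_on_SucD by (intro Ck_on_add[OF assms] Suc.IH) auto
    ultimately show ?thesis using Ck_on_cong[OF assms, of "pderiv3 (\<lambda>z. f z * h z) i"] by simp
  qed
  then show ?case using Suc.prems by (simp add: differentiable_on_mult)
qed

lemma Ck_on_component: "Ck_on k (\<lambda>z::real^3. z $ j) S"
proof (cases k)
  case 0
  then show ?thesis by (simp add: continuous_on_component)
next
  case (Suc m)
  have "pderiv3 (\<lambda>z::real^3. z $ j) i = (\<lambda>z. if i = j then 1 else 0)" for i
    by (simp add: fun_eq_iff pderiv3_component)
  then show ?thesis
    using Suc Ck_on_const[of m "1::real" S] Ck_on_const[of m "0::real" S]
    by (simp add: bounded_linear_imp_differentiable_on bounded_linear_vec_nth)
qed

lemma Ck_on_norm: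
  assumes "open S" "0 \<notin> S"
  shows "Ck_on k (\<lambda>z::real^3. norm z) S \<and> Ck_on k (\<lambda>z::real^3. 1 / norm z) S"
proof (induction k)
  case 0
  have "continuous_on S (\<lambda>z::real^3. 1 / norm z)"
    using assms(2) by (intro continuous_intros) auto
  then show ?case by (simp add: continuous_on_norm_id)
next
  case (Suc k)
  have nz: "z \<in> S \<Longrightarrow> z \<noteq> 0" for z using assms by blast
  have inv: "Ck_on k (\<lambda>z::real^3. 1 / norm z) S" using Suc by simp
  have "Ck_on k (pderiv3 (\<lambda>z::real^3. norm z) i) S" for i
    using Ck_on_cong[OF assms(1) pderiv3_norm[OF nz]] Ck_on_mult[OF assms(1) Ck_on_component inv]
    by simp
  moreover have "Ck_on k (pderiv3 (\<lambda>z::real^3. 1 / norm z) i) S" for i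
  proof -
    have "Ck_on k (\<lambda>z::real^3. - z $ i * (1 / norm z * (1 / norm z) * (1 / norm z))) S"
      using Ck_on_mult[OF assms(1) Ck_on_mult[OF assms(1) Ck_on_const Ck_on_component]
          Ck_on_mult[OF assms(1) Ck_on_mult[OF assms(1) inv inv] inv], of "-1" i]
      by simp
    then show ?thesis
      using Ck_on_cong[OF assms(1) pderiv3_inverse_norm[OF nz]] by simp
  qed
  ultimately show ?case
    using nz differentiable_inverse_norm
    by (simp add: differentiable_at_imp_differentiable_on)
qed

lemma Ck_on_3_iff:
  "Ck_on 3 f S \<longleftrightarrow> f differentiable_on S \<and> (\<forall>i. pderiv3 f i differentiable_on S \<and>
     (\<forall>j. pderiv3 (pderiv3 f i) j differentiable_on S \<and>
       (\<forall>k. continuous_on S (pderiv3 (pderiv3 (pderiv3 f i) j) k))))"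
  by (simp add: numeral_3_eq_3)

section \<open>Symmetry of second partial derivatives\<close>

lemma pderiv3_shift:
  fixes f :: "real^3 \<Rightarrow> real"
  assumes "f differentiable at (z + c)"
  shows "(\<lambda>w. f (w + c)) differentiable at z" "pderiv3 (\<lambda>w. f (w + c)) i z = pderiv3 f i (z + c)"
proof -
  have "((\<lambda>w. w + c) has_derivative (\<lambda>d. d)) (at z)"
    by (auto intro!: derivative_eq_intros)
  from has_derivative_compose[OF this assms[unfolded frechet_derivative_works]]
  have shifted: "((\<lambda>w. f (w + c)) has_derivative frechet_derivative f (at (z + c))) (at z)"
    by (simp add: o_def)
  then show "(\<lambda>w. f (w + c)) differentiable at z"
    by (rule differentiableI)
  show "pderiv3 (\<lambda>w. f (w + c)) i z = pderiv3 f i (z + c)"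
    using pderiv3_eq[OF shifted] by (simp only: pderiv3_def)
qed

lemma mvt_along_axis:
  fixes g :: "real^3 \<Rightarrow> real"
  assumes h: "0 < h" and g: "\<And>s. 0 \<le> s \<Longrightarrow> s \<le> h \<Longrightarrow> g differentiable at (z + s *\<^sub>R axis k 1)"
  shows "\<exists>s\<in>{0<..<h}. g (z + h *\<^sub>R axis k 1) - g z = h * pderiv3 g k (z + s *\<^sub>R axis k 1)"
proof -
  have "((\<lambda>s. g (z + s *\<^sub>R axis k 1)) has_derivative (\<lambda>d. d * pderiv3 g k (z + s *\<^sub>R axis k 1)))
      (at s within {0..h})" if "0 \<le> s" "s \<le> h" for s
    using has_derivative_along_axis[OF g[OF that]] by (rule has_derivative_at_withinI)
  from mvt_simple[OF h this] show ?thesis by simp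
qed

lemma second_difference_mvt:
  fixes f :: "real^3 \<Rightarrow> real"
  assumes S: "open S" and h: "0 < h" and ball: "cball y (2 * h) \<subseteq> S"
    and fd: "f differentiable_on S" and fid: "pderiv3 f i differentiable_on S"
  shows "\<exists>z. dist z y < 2 * h \<and>
    f (y + h *\<^sub>R axis i 1 + h *\<^sub>R axis j 1) - f (y + h *\<^sub>R axis i 1) - f (y + h *\<^sub>R axis j 1) + f y
      = h\<^sup>2 * pderiv3 (pderiv3 f i) j z"
proof -
  let ?a = "axis i (1::real)" and ?b = "axis j (1::real)"
  have near: "dist (y + s *\<^sub>R ?a + t *\<^sub>R ?b) y \<le> s + t" if "0 \<le> s" "0 \<le> t" for s t
    using norm_triangle_ineq[of "s *\<^sub>R ?a" "t *\<^sub>R ?b"] that by (simp add: dist_norm add.assoc)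
  have diff_at: "g differentiable at (y + s *\<^sub>R ?a + t *\<^sub>R ?b)"
    if "g differentiable_on S" "0 \<le> s" "s \<le> h" "0 \<le> t" "t \<le> h" for g s t
  proof -
    have "y + s *\<^sub>R ?a + t *\<^sub>R ?b \<in> S"
      using near[of s t] that ball by (auto simp: dist_commute)
    then show ?thesis using that(1) differentiable_on_eq_differentiable_at[OF S] by blast
  qed
  define g where "g w = f (w + h *\<^sub>R ?b) - f w" for w
  have g: "g differentiable at (y + s *\<^sub>R ?a)"
    "pderiv3 g i (y + s *\<^sub>R ?a) = pderiv3 f i (y + s *\<^sub>R ?a + h *\<^sub>R ?b) - pderiv3 f i (y + s *\<^sub>R ?a)"
    if "0 \<le> s" "s \<le> h" for s
  proof -
    have "f differentiable at (y + s *\<^sub>R ?a + h *\<^sub>R ?b)" "f differentiable at (y + s *\<^sub>R ?a)"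
      using diff_at[OF fd that, of h] diff_at[OF fd that, of 0] h by simp_all
    with pderiv3_shift[of f "y + s *\<^sub>R ?a" "h *\<^sub>R ?b"]
    show "g differentiable at (y + s *\<^sub>R ?a)"
      "pderiv3 g i (y + s *\<^sub>R ?a) = pderiv3 f i (y + s *\<^sub>R ?a + h *\<^sub>R ?b) - pderiv3 f i (y + s *\<^sub>R ?a)"
      unfolding g_def[abs_def] by (simp_all add: pderiv3_diff differentiable_diff)
  qed
  obtain \<sigma> where \<sigma>: "\<sigma> \<in> {0<..<h}" and mv1: "g (y + h *\<^sub>R ?a) - g y = h * pderiv3 g i (y + \<sigma> *\<^sub>R ?a)"
    using mvt_along_axis[OF h g(1)] by blast
  obtain \<tau> where \<tau>: "\<tau> \<in> {0<..<h}" and mv2: "pderiv3 f i (y + \<sigma> *\<^sub>R ?a + h *\<^sub>R ?b)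
      - pderiv3 f i (y + \<sigma> *\<^sub>R ?a) = h * pderiv3 (pderiv3 f i) j (y + \<sigma> *\<^sub>R ?a + \<tau> *\<^sub>R ?b)"
    using mvt_along_axis[OF h, of "pderiv3 f i" "y + \<sigma> *\<^sub>R ?a" j] diff_at[OF fid] \<sigma> by auto
  have "g (y + h *\<^sub>R ?a) - g y = f (y + h *\<^sub>R ?a + h *\<^sub>R ?b) - f (y + h *\<^sub>R ?a) - f (y + h *\<^sub>R ?b) + f y"
    unfolding g_def by simp
  moreover have "dist (y + \<sigma> *\<^sub>R ?a + \<tau> *\<^sub>R ?b) y < 2 * h"
    using near[of \<sigma> \<tau>] \<sigma> \<tau> by simp
  ultimately show ?thesis
    using mv1 mv2 g(2)[of \<sigma>] \<sigma> by (intro exI[of _ "y + \<sigma> *\<^sub>R ?a + \<tau> *\<^sub>R ?b"]) (simp add: power2_eq_square)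
qed

lemma pderiv3_commute:
  fixes f :: "real^3 \<Rightarrow> real"
  assumes S: "open S" and f: "Ck_on 2 f S" and y: "y \<in> S"
  shows "pderiv3 (pderiv3 f i) j y = pderiv3 (pderiv3 f j) i y"
proof (rule ccontr)
  let ?D1 = "pderiv3 (pderiv3 f i) j" and ?D2 = "pderiv3 (pderiv3 f j) i"
  define e where "e = \<bar>?D1 y - ?D2 y\<bar> / 2"
  assume "?D1 y \<noteq> ?D2 y"
  then have e: "e > 0" unfolding e_def by simp
  have f_diff: "f differentiable_on S" "pderiv3 f k differentiable_on S"
    and cont: "continuous_on S (pderiv3 (pderiv3 f k) l)" for k l
    using f by (simp_all add: numeral_2_eq_2)
  obtain d1 where d1: "d1 > 0" "\<And>z. dist z y < d1 \<Longrightarrow> dist (?D1 z) (?D1 y) < e"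
    using cont[of i j] S y e unfolding continuous_on_eq_continuous_at[OF S] continuous_at_eps_delta by blast
  obtain d2 where d2: "d2 > 0" "\<And>z. dist z y < d2 \<Longrightarrow> dist (?D2 z) (?D2 y) < e"
    using cont[of j i] S y e unfolding continuous_on_eq_continuous_at[OF S] continuous_at_eps_delta by blast
  obtain r where r: "r > 0" "ball y r \<subseteq> S" using S y open_contains_ball by blast
  define h where "h = min r (min d1 d2) / 3"
  have h: "h > 0" "cball y (2 * h) \<subseteq> S" "2 * h < d1" "2 * h < d2"
    using r d1 d2 unfolding h_def by auto
  obtain z1 where z1: "dist z1 y < 2 * h"
    "f (y + h *\<^sub>R axis i 1 + h *\<^sub>R axis j 1) - f (y + h *\<^sub>R axis i 1) - f (y + h *\<^sub>R axis j 1) + f y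
      = h\<^sup>2 * ?D1 z1"
    using second_difference_mvt[OF S h(1,2) f_diff(1) f_diff(2)[of i], where j = j] by blast
  obtain z2 where z2: "dist z2 y < 2 * h"
    "f (y + h *\<^sub>R axis j 1 + h *\<^sub>R axis i 1) - f (y + h *\<^sub>R axis j 1) - f (y + h *\<^sub>R axis i 1) + f y
      = h\<^sup>2 * ?D2 z2"
    using second_difference_mvt[OF S h(1,2) f_diff(1) f_diff(2)[of j], where j = i] by blast
  have "y + h *\<^sub>R axis j 1 + h *\<^sub>R axis i (1::real) = y + h *\<^sub>R axis i 1 + h *\<^sub>R axis j 1"
    by (simp add: algebra_simps)
  then have "h\<^sup>2 * ?D1 z1 = h\<^sup>2 * ?D2 z2"
    using z1(2) z2(2) by (simp only:)
  then have "?D1 z1 = ?D2 z2" using h(1) by simp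
  moreover have "\<bar>?D1 z1 - ?D1 y\<bar> < e" "\<bar>?D2 z2 - ?D2 y\<bar> < e"
    using d1(2)[of z1] d2(2)[of z2] z1(1) z2(1) h(3,4) by (simp_all add: dist_real_def)
  ultimately show False
    using abs_triangle_ineq[of "?D1 y - ?D1 z1" "?D2 z2 - ?D2 y"] unfolding e_def
    by (simp add: abs_minus_commute)
qed

section \<open>Homogeneous functions and cones\<close>

lemma euler_zero_homogeneous:
  fixes f :: "real^3 \<Rightarrow> real"
  assumes fd: "f differentiable at y" and hom: "\<And>t. t > 0 \<Longrightarrow> f (t *\<^sub>R y) = f y"
  shows "(\<Sum>i\<in>UNIV. y$i * pderiv3 f i y) = 0"
proof -
  let ?F = "frechet_derivative f (at y)"
  have "((\<lambda>t::real. y + t *\<^sub>R y) has_derivative (\<lambda>d. d *\<^sub>R y)) (at 0)"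
    by (auto intro!: derivative_eq_intros)
  from has_derivative_compose[OF this] fd
  have line: "((\<lambda>t. f (y + t *\<^sub>R y)) has_derivative (\<lambda>d. ?F (d *\<^sub>R y))) (at 0)"
    by (simp add: o_def frechet_derivative_works)
  have "f (y + t *\<^sub>R y) = f y" if "t \<in> {-1<..}" for t
    using hom[of "1 + t"] that by (simp add: algebra_simps)
  then have "((\<lambda>t::real. f y) has_derivative (\<lambda>d. ?F (d *\<^sub>R y))) (at 0)"
    by (intro has_derivative_transform_within_open[OF line, of "{-1<..}"]) auto
  then have "(\<lambda>d. ?F (d *\<^sub>R y)) = (\<lambda>d. 0)"
    using has_derivative_unique has_derivative_const by blast
  then have "?F y = 0" by (metis scaleR_one)
  then show ?thesis using frechet_derivative_eq_sum_pderiv3[OF fd] by simp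
qed

lemma pderiv3_rescale:
  fixes f :: "real^3 \<Rightarrow> real"
  assumes S: "open S" "y \<in> S" and hom: "\<And>z. z \<in> S \<Longrightarrow> f (t *\<^sub>R z) = f z"
    and fd: "f differentiable at (t *\<^sub>R y)"
  shows "pderiv3 f i y = t * pderiv3 f i (t *\<^sub>R y)"
proof -
  let ?F = "frechet_derivative f (at (t *\<^sub>R y))"
  have "((\<lambda>z::real^3. t *\<^sub>R z) has_derivative (\<lambda>d. t *\<^sub>R d)) (at y)"
    by (auto intro!: derivative_eq_intros)
  from has_derivative_compose[OF this] fd
  have "((\<lambda>z. f (t *\<^sub>R z)) has_derivative (\<lambda>d. ?F (t *\<^sub>R d))) (at y)"
    by (simp add: o_def frechet_derivative_works)
  then have "(f has_derivative (\<lambda>d. ?F (t *\<^sub>R d))) (at y)"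
    by (rule has_derivative_transform_within_open[OF _ S]) (simp add: hom)
  then have "pderiv3 f i y = ?F (t *\<^sub>R axis i 1)" by (rule pderiv3_eq)
  also have "\<dots> = t * ?F (axis i 1)" by (simp add: linear_cmul[OF linear_frechet_derivative[OF fd]])
  finally show ?thesis by (simp add: pderiv3_def)
qed

lemma cone3_scaleR: "y \<in> cone3 U \<Longrightarrow> t > 0 \<Longrightarrow> t *\<^sub>R y \<in> cone3 U"
  unfolding cone3_def by auto

lemma cone3_nonzero: "y \<in> cone3 U \<Longrightarrow> y \<noteq> 0"
  unfolding cone3_def by auto

lemma cone3_normalize: "y \<in> cone3 U \<Longrightarrow> (1 / norm y) *\<^sub>R y \<in> U"
  unfolding cone3_def by auto

lemma sphere_subset_cone3: "U \<subseteq> sphere 0 1 \<Longrightarrow> U \<subseteq> cone3 U"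
  unfolding cone3_def by auto

lemma open_cone3:
  assumes "openin (top_of_set (sphere 0 1)) U"
  shows "open (cone3 U)"
proof -
  obtain V where V: "open V" "U = sphere 0 1 \<inter> V" using assms by (auto simp: openin_open)
  have "continuous_on (- {0}) (\<lambda>y::real^3. (1 / norm y) *\<^sub>R y)"
    by (intro continuous_intros) auto
  then have "open ((- {0}) \<inter> (\<lambda>y::real^3. (1 / norm y) *\<^sub>R y) -` V)"
    by (rule continuous_open_preimage[OF _ _ V(1)]) (simp add: open_Compl)
  moreover have "cone3 U = (- {0}) \<inter> (\<lambda>y::real^3. (1 / norm y) *\<^sub>R y) -` V"
    unfolding cone3_def V(2) by auto
  ultimately show ?thesis by simp
qed

lemma sph_ext_scaleR: "(y::real^3) \<noteq> 0 \<Longrightarrow> t > 0 \<Longrightarrow> sph_ext f (t *\<^sub>R y) = sph_ext f y"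
  unfolding sph_ext_def by simp

lemma sph_ext_sphere: "norm (x::real^3) = 1 \<Longrightarrow> sph_ext f x = f x"
  unfolding sph_ext_def by simp

section \<open>Tangential Hessians under a trace condition\<close>

definition elliptic_on_tangent :: "real \<Rightarrow> real \<Rightarrow> real^3^3 \<Rightarrow> real^3 \<Rightarrow> bool" where
  "elliptic_on_tangent lam Lam M x \<longleftrightarrow> (\<forall>\<xi>. \<xi> \<bullet> x = 0 \<longrightarrow>
     lam * (norm \<xi>)\<^sup>2 \<le> \<xi> \<bullet> (M *v \<xi>) \<and> \<xi> \<bullet> (M *v \<xi>) \<le> Lam * (norm \<xi>)\<^sup>2)"

lemma symmetric_matrix_inner:
  fixes M :: "real^'n^'n"
  assumes "transpose M = M"
  shows "(M *v v) \<bullet> w = v \<bullet> (M *v w)"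
proof -
  have "M *v v = v v* M" using transpose_matrix_vector[of M v] assms by simp
  then show ?thesis by (simp add: dot_lmul_matrix)
qed

lemma cross3_orthonormal:
  fixes x a :: "real^3"
  assumes "norm x = 1" "norm a = 1" "a \<bullet> x = 0"
  shows "norm (cross3 x a) = 1" "cross3 x a \<bullet> a = 0" "cross3 x a \<bullet> x = 0"
proof -
  have "(norm (cross3 x a))\<^sup>2 = 1"
    using norm_cross_dot[of x a] assms by (simp add: inner_commute)
  then show "norm (cross3 x a) = 1" using norm_ge_zero[of "cross3 x a"] by (simp add: power2_eq_1_iff)
  show "cross3 x a \<bullet> a = 0" "cross3 x a \<bullet> x = 0"
    using dot_cross_self by (simp_all add: inner_commute)
qed

lemma orthonormal_frame_expansion:
  fixes x a z :: "real^3"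
  assumes x: "norm x = 1" and a: "norm a = 1" and ax: "a \<bullet> x = 0"
  shows "z = (z \<bullet> a) *\<^sub>R a + (z \<bullet> cross3 x a) *\<^sub>R cross3 x a + (z \<bullet> x) *\<^sub>R x"
proof -
  define b where "b = cross3 x a"
  have b: "norm b = 1" "b \<bullet> a = 0" "b \<bullet> x = 0"
    unfolding b_def using cross3_orthonormal[OF assms] by auto
  have aa: "a \<bullet> a = 1" and bb: "b \<bullet> b = 1" and xx: "x \<bullet> x = 1"
    using x a b by (simp_all add: dot_square_norm)
  define w where "w = z - ((z \<bullet> a) *\<^sub>R a + (z \<bullet> b) *\<^sub>R b + (z \<bullet> x) *\<^sub>R x)"
  have "a \<bullet> w = 0" "b \<bullet> w = 0" "x \<bullet> w = 0"
    unfolding w_def using aa bb xx ax b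
    by (simp_all add: inner_diff_right inner_add_right inner_commute)
  moreover have "cross3 (cross3 x a) w = (x \<bullet> w) *\<^sub>R a - (a \<bullet> w) *\<^sub>R x"
    by (simp add: cross3_simps forall_3)
  ultimately have "cross3 b w = 0"
    unfolding b_def by simp
  then have "w = 0" using norm_cross_dot[of b w] \<open>b \<bullet> w = 0\<close> b(1) by simp
  then show ?thesis unfolding w_def b_def by simp
qed

lemma tangent_symmetric_matrix_entries:
  fixes H :: "real^3^3" and x a b :: "real^3"
  assumes x: "norm x = 1" and a: "norm a = 1" "a \<bullet> x = 0" and b_def: "b = cross3 x a"
    and H_sym: "transpose H = H" and Hx: "H *v x = 0"
  defines "p \<equiv> a \<bullet> (H *v a)" and "q \<equiv> b \<bullet> (H *v a)" and "r \<equiv> b \<bullet> (H *v b)"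
  shows "H$k$i = a$i * (p * a$k + q * b$k) + b$i * (q * a$k + r * b$k)"
    and "(norm (H *v a))\<^sup>2 = p\<^sup>2 + q\<^sup>2"
proof -
  have fr: "z = (z \<bullet> a) *\<^sub>R a + (z \<bullet> b) *\<^sub>R b + (z \<bullet> x) *\<^sub>R x" for z
    unfolding b_def by (rule orthonormal_frame_expansion[OF x a])
  have Hv_x: "(H *v v) \<bullet> x = 0" for v
    using symmetric_matrix_inner[OF H_sym, of v x] Hx by simp
  have Ha: "H *v a = p *\<^sub>R a + q *\<^sub>R b"
    using fr[of "H *v a"] Hv_x unfolding p_def q_def by (simp add: inner_commute)
  have Hb: "H *v b = q *\<^sub>R a + r *\<^sub>R b"
    using fr[of "H *v b"] Hv_x symmetric_matrix_inner[OF H_sym, of b a]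
    unfolding q_def r_def by (simp add: inner_commute)
  have "H$k$i = (H *v axis i 1) $ k"
    using exhaust_3[of i] by (auto simp: matrix_vector_mult_def axis_def sum_3)
  also have "\<dots> = (H *v ((a$i) *\<^sub>R a + (b$i) *\<^sub>R b + (x$i) *\<^sub>R x)) $ k"
    using fr[of "axis i 1"] by (simp add: inner_axis')
  also have "\<dots> = a$i * (p * a$k + q * b$k) + b$i * (q * a$k + r * b$k)"
    by (simp add: matrix_vector_right_distrib matrix_vector_mult_scaleR Ha Hb Hx algebra_simps)
  finally show "H$k$i = a$i * (p * a$k + q * b$k) + b$i * (q * a$k + r * b$k)" .
  have "a \<bullet> a = 1" "b \<bullet> b = 1" "b \<bullet> a = 0"
    using cross3_orthonormal[OF x a] a(1) unfolding b_def[symmetric] by (simp_all add: dot_square_norm)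
  then show "(norm (H *v a))\<^sup>2 = p\<^sup>2 + q\<^sup>2"
    unfolding power2_norm_eq_inner Ha
    by (simp add: inner_add_left inner_add_right inner_commute[of a b] power2_eq_square)
qed

lemma elliptic_mixed_term_bound:
  fixes A :: "real^3^3" and x a b :: "real^3"
  assumes A_sym: "transpose A = A" and ell: "elliptic_on_tangent lam Lam A x" and lam: "0 < lam"
    and a: "norm a = 1" "a \<bullet> x = 0" and b: "norm b = 1" "b \<bullet> x = 0" and ab: "a \<bullet> b = 0"
  shows "\<bar>a \<bullet> (A *v b) + b \<bullet> (A *v a)\<bar> \<le> Lam"
proof -
  have sym: "b \<bullet> (A *v a) = a \<bullet> (A *v b)"
    using symmetric_matrix_inner[OF A_sym, of b a] by (simp add: inner_commute)
  have "a \<bullet> a = 1" "b \<bullet> b = 1"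
    using a(1) b(1) by (simp_all add: dot_square_norm)
  then have norms: "(norm (a + b))\<^sup>2 = 2" "(norm (a - b))\<^sup>2 = 2"
    using ab unfolding power2_norm_eq_inner
    by (simp_all add: inner_add_left inner_add_right inner_diff_left inner_diff_right inner_commute[of b a])
  have ell': "lam * (norm \<xi>)\<^sup>2 \<le> \<xi> \<bullet> (A *v \<xi>)" "\<xi> \<bullet> (A *v \<xi>) \<le> Lam * (norm \<xi>)\<^sup>2"
    if "\<xi> \<bullet> x = 0" for \<xi>
    using ell that unfolding elliptic_on_tangent_def by auto
  have "(a + b) \<bullet> x = 0" "(a - b) \<bullet> x = 0"
    using a b by (simp_all add: inner_add_left inner_diff_left)
  from ell'[OF this(1)] ell'[OF this(2)] have "lam * 2 \<le> (a + b) \<bullet> (A *v (a + b))" "(a - b) \<bullet> (A *v (a - b)) \<le> Lam * 2"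
    "lam * 2 \<le> (a - b) \<bullet> (A *v (a - b))" "(a + b) \<bullet> (A *v (a + b)) \<le> Lam * 2"
    unfolding norms by simp_all
  moreover have "(a + b) \<bullet> (A *v (a + b)) - (a - b) \<bullet> (A *v (a - b)) = 4 * (a \<bullet> (A *v b))"
    using sym by (simp add: matrix_vector_right_distrib matrix_vector_mult_diff_distrib
        inner_add_left inner_add_right inner_diff_left inner_diff_right)
  ultimately show ?thesis
    unfolding sym abs_le_iff using lam by linarith
qed

lemma elliptic_trace_weight_bound:
  fixes A :: "real^3^3" and x a b :: "real^3"
  assumes A_sym: "transpose A = A" and ell: "elliptic_on_tangent lam Lam A x" and lam: "0 < lam"
    and a: "norm a = 1" "a \<bullet> x = 0" and b: "norm b = 1" "b \<bullet> x = 0" and ab: "a \<bullet> b = 0"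
    and trace: "p * (a \<bullet> (A *v a)) + q * (a \<bullet> (A *v b) + b \<bullet> (A *v a)) + r * (b \<bullet> (A *v b)) = 0"
  shows "\<bar>r\<bar> \<le> Lam / lam * (\<bar>p\<bar> + \<bar>q\<bar>)"
proof -
  have aAa: "lam \<le> a \<bullet> (A *v a)" "a \<bullet> (A *v a) \<le> Lam" and bAb: "lam \<le> b \<bullet> (A *v b)"
    using ell a b unfolding elliptic_on_tangent_def by auto
  have "lam * \<bar>r\<bar> \<le> \<bar>r\<bar> * (b \<bullet> (A *v b))"
    using mult_left_mono[OF bAb abs_ge_zero[of r]] by (simp add: mult.commute)
  also have "\<dots> = \<bar>r * (b \<bullet> (A *v b))\<bar>"
    using bAb lam by (simp add: abs_mult)
  also have "r * (b \<bullet> (A *v b)) = - (p * (a \<bullet> (A *v a)) + q * (a \<bullet> (A *v b) + b \<bullet> (A *v a)))"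
    using trace by linarith
  also have "\<bar>- (p * (a \<bullet> (A *v a)) + q * (a \<bullet> (A *v b) + b \<bullet> (A *v a)))\<bar>
      = \<bar>p * (a \<bullet> (A *v a)) + q * (a \<bullet> (A *v b) + b \<bullet> (A *v a))\<bar>"
    by (rule abs_minus_cancel)
  also have "\<dots> \<le> \<bar>p\<bar> * \<bar>a \<bullet> (A *v a)\<bar> + \<bar>q\<bar> * \<bar>a \<bullet> (A *v b) + b \<bullet> (A *v a)\<bar>"
    using abs_triangle_ineq[of "p * (a \<bullet> (A *v a))" "q * (a \<bullet> (A *v b) + b \<bullet> (A *v a))"]
    by (simp add: abs_mult)
  also have "\<dots> \<le> \<bar>p\<bar> * Lam + \<bar>q\<bar> * Lam"
    using aAa lam elliptic_mixed_term_bound[OF A_sym ell lam a b ab]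
    by (intro add_mono mult_left_mono) auto
  finally show ?thesis
    using lam by (simp add: field_simps)
qed

lemma tangent_hessian_entry_bound_unit:
  fixes H A :: "real^3^3" and x a :: "real^3"
  assumes x: "norm x = 1" and H_sym: "transpose H = H" and Hx: "H *v x = 0"
    and A_sym: "transpose A = A" and trace: "(\<Sum>i\<in>UNIV. \<Sum>k\<in>UNIV. A$i$k * H$k$i) = 0"
    and ell: "elliptic_on_tangent lam Lam A x" and lam: "0 < lam"
    and a: "norm a = 1" "a \<bullet> x = 0"
  shows "\<bar>H$k$i\<bar> \<le> (3 + 2 * Lam / lam) * norm (H *v a)"
proof -
  define b where "b = cross3 x a"
  define p q r where "p = a \<bullet> (H *v a)" and "q = b \<bullet> (H *v a)" and "r = b \<bullet> (H *v b)"
  have b: "norm b = 1" "b \<bullet> a = 0" "b \<bullet> x = 0"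
    unfolding b_def using cross3_orthonormal[OF x a] by auto
  note frame = tangent_symmetric_matrix_entries[OF x a b_def H_sym Hx, folded p_def q_def r_def]
  have H_entry: "H$k$i = a$i * (p * a$k + q * b$k) + b$i * (q * a$k + r * b$k)" for k i
    by (rule frame(1))
  from frame(2) have pq: "\<bar>p\<bar> \<le> norm (H *v a)" "\<bar>q\<bar> \<le> norm (H *v a)"
    by (metis abs_le_square_iff abs_norm_cancel le_add_same_cancel1 zero_le_power2,
        metis abs_le_square_iff abs_norm_cancel le_add_same_cancel2 zero_le_power2)
  have "p * (a \<bullet> (A *v a)) + q * (a \<bullet> (A *v b) + b \<bullet> (A *v a)) + r * (b \<bullet> (A *v b))
      = (\<Sum>i\<in>UNIV. \<Sum>k\<in>UNIV. A$i$k * H$k$i)"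
    unfolding H_entry by (simp add: sum_3 inner_vec_def matrix_vector_mult_def algebra_simps)
  then have r_bound: "\<bar>r\<bar> \<le> Lam / lam * (\<bar>p\<bar> + \<bar>q\<bar>)"
    using elliptic_trace_weight_bound[OF A_sym ell lam a b(1,3)] b(2) trace by (simp add: inner_commute)
  have unit_components: "\<bar>a$j\<bar> \<le> 1" "\<bar>b$j\<bar> \<le> 1" for j
    using component_le_norm_cart[of a j] component_le_norm_cart[of b j] a(1) b(1) by auto
  have Lam_lam: "lam \<le> Lam"
    using ell a unfolding elliptic_on_tangent_def by fastforce
  have tri: "\<bar>u * v + w * z\<bar> \<le> \<bar>u\<bar> * \<bar>v\<bar> + \<bar>w\<bar> * \<bar>z\<bar>" for u v w z :: real
    using abs_triangle_ineq[of "u * v" "w * z"] by (simp add: abs_mult)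
  have "\<bar>H$k$i\<bar> \<le> \<bar>a$i\<bar> * (\<bar>p\<bar> * \<bar>a$k\<bar> + \<bar>q\<bar> * \<bar>b$k\<bar>) + \<bar>b$i\<bar> * (\<bar>q\<bar> * \<bar>a$k\<bar> + \<bar>r\<bar> * \<bar>b$k\<bar>)"
    unfolding H_entry by (rule order_trans[OF tri]) (intro add_mono mult_left_mono tri abs_ge_zero)
  also have "\<dots> \<le> 1 * (\<bar>p\<bar> * 1 + \<bar>q\<bar> * 1) + 1 * (\<bar>q\<bar> * 1 + \<bar>r\<bar> * 1)"
    using unit_components by (intro add_mono mult_mono) auto
  also have "\<dots> \<le> 3 * norm (H *v a) + Lam / lam * (norm (H *v a) + norm (H *v a))"
    using pq r_bound mult_left_mono[OF add_mono[OF pq], of "Lam / lam"] Lam_lam lam by simp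
  also have "\<dots> = (3 + 2 * Lam / lam) * norm (H *v a)"
    by (simp add: algebra_simps)
  finally show ?thesis .
qed

lemma tangent_hessian_entry_bound:
  fixes H A :: "real^3^3" and x e :: "real^3"
  assumes x: "norm x = 1" and H_sym: "transpose H = H" and Hx: "H *v x = 0"
    and A_sym: "transpose A = A" and trace: "(\<Sum>i\<in>UNIV. \<Sum>k\<in>UNIV. A$i$k * H$k$i) = 0"
    and ell: "elliptic_on_tangent lam Lam A x" and lam: "0 < lam" and ex: "e \<bullet> x = 0"
  shows "\<bar>H$k$i\<bar> * norm e \<le> (3 + 2 * Lam / lam) * norm (H *v e)"
proof (cases "e = 0")
  case False
  define a where "a = (1 / norm e) *\<^sub>R e"
  have a: "norm a = 1" "a \<bullet> x = 0" and e: "e = norm e *\<^sub>R a"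
    unfolding a_def using False ex by simp_all
  have "\<bar>H$k$i\<bar> * norm e \<le> (3 + 2 * Lam / lam) * norm (H *v a) * norm e"
    using tangent_hessian_entry_bound_unit[OF x H_sym Hx A_sym trace ell lam a]
    by (simp add: mult_right_mono)
  moreover have "norm (H *v e) = norm e * norm (H *v a)"
    by (subst e) (simp add: matrix_vector_mult_scaleR)
  ultimately show ?thesis by (simp add: algebra_simps)
qed simp

lemma tangent_contraction_bound:
  fixes H A :: "real^3^3" and x c :: "real^3" and D :: "3 \<Rightarrow> 3 \<Rightarrow> real^3"
  assumes x: "norm x = 1" and H_sym: "transpose H = H" and Hx: "H *v x = 0"
    and A_sym: "transpose A = A" and trace: "(\<Sum>i\<in>UNIV. \<Sum>k\<in>UNIV. A$i$k * H$k$i) = 0"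
    and ell: "elliptic_on_tangent lam Lam A x" and lam: "0 < lam"
    and D_radial: "\<And>i k. D i k \<bullet> x = 0" and D_bound: "\<And>i k m. \<bar>D i k $ m\<bar> \<le> K"
  shows "\<bar>\<Sum>i\<in>UNIV. \<Sum>k\<in>UNIV. (c \<bullet> D i k) * H$k$i\<bar> \<le> 27 * K * (3 + 2 * Lam / lam) * norm (H *v c)"
proof -
  define e where "e = c - (c \<bullet> x) *\<^sub>R x"
  have ex: "e \<bullet> x = 0"
    using x by (simp add: e_def inner_diff_left dot_square_norm)
  have He: "H *v e = H *v c"
    by (simp add: e_def matrix_vector_mult_diff_distrib matrix_vector_mult_scaleR Hx)
  have summand_bound: "\<bar>(c \<bullet> D i k) * H$k$i\<bar> \<le> 3 * K * (3 + 2 * Lam / lam) * norm (H *v c)" for i k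
  proof -
    have "c \<bullet> D i k = e \<bullet> D i k"
      using D_radial[of i k] by (simp add: e_def inner_diff_right inner_commute)
    moreover have "norm (D i k) \<le> 3 * K"
      using norm_le_l1_cart[of "D i k"] sum_mono[of UNIV "\<lambda>m. \<bar>D i k $ m\<bar>" "\<lambda>m. K"] D_bound
      by simp
    ultimately have "\<bar>c \<bullet> D i k\<bar> \<le> norm e * (3 * K)"
      using Cauchy_Schwarz_ineq2[of e "D i k"] by (metis mult_left_mono norm_ge_zero order_trans)
    from mult_left_mono[OF this abs_ge_zero[of "H$k$i"]]
    have "\<bar>(c \<bullet> D i k) * H$k$i\<bar> \<le> 3 * K * (\<bar>H$k$i\<bar> * norm e)"
      by (simp add: abs_mult algebra_simps)
    also have "\<dots> \<le> 3 * K * ((3 + 2 * Lam / lam) * norm (H *v c))"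
      using tangent_hessian_entry_bound[OF x H_sym Hx A_sym trace ell lam ex] He D_bound[of i k 1]
      by (intro mult_left_mono) auto
    finally show ?thesis by (simp add: algebra_simps)
  qed
  have "\<bar>\<Sum>i\<in>UNIV. \<Sum>k\<in>UNIV. (c \<bullet> D i k) * H$k$i\<bar> \<le> (\<Sum>i\<in>UNIV. \<Sum>k\<in>UNIV. \<bar>(c \<bullet> D i k) * H$k$i\<bar>)"
    by (rule order_trans[OF sum_abs sum_mono[OF sum_abs]])
  also have "\<dots> \<le> (\<Sum>i\<in>(UNIV::3 set). \<Sum>k\<in>(UNIV::3 set). 3 * K * (3 + 2 * Lam / lam) * norm (H *v c))"
    by (intro sum_mono summand_bound)
  also have "\<dots> = 27 * K * (3 + 2 * Lam / lam) * norm (H *v c)"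
    by simp
  finally show ?thesis .
qed

section \<open>The field \<open>X\<^sub>u\<close> as a gradient\<close>

definition radial_ext :: "(real^3 \<Rightarrow> real) \<Rightarrow> real^3 \<Rightarrow> real" where
  "radial_ext u y = norm y * sph_ext u y"

lemma Fop_eq_sum:
  "Fop A f x = (\<Sum>i\<in>UNIV. \<Sum>k\<in>UNIV. A x $ i $ k * pderiv3 (pderiv3 (sph_ext f) i) k x)"
  unfolding Fop_def shess_def hess3_def trace_def matrix_matrix_mult_def by simp

context
  fixes U :: "(real^3) set" and u :: "real^3 \<Rightarrow> real"
  assumes U_sphere: "U \<subseteq> sphere 0 1"
    and U_open: "openin (top_of_set (sphere 0 1)) U"
    and u_C3: "sph_Ck 3 u U"
begin

abbreviation "Xu_ext k \<equiv> pderiv3 (radial_ext u) k"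

lemma open_cone: "open (cone3 U)"
  using U_open by (rule open_cone3)

lemma U_cone3: "x \<in> U \<Longrightarrow> x \<in> cone3 U" and U_norm: "x \<in> U \<Longrightarrow> norm x = 1"
  using sphere_subset_cone3[OF U_sphere] U_sphere by auto

lemma radial_ext_C3: "Ck_on 3 (radial_ext u) (cone3 U)"
proof -
  have "0 \<notin> cone3 U" using cone3_nonzero by blast
  from Ck_on_norm[OF open_cone this] u_C3 show ?thesis
    unfolding radial_ext_def[abs_def] sph_Ck_def by (blast intro: Ck_on_mult[OF open_cone])
qed

lemma Xu_ext_C2: "Ck_on 2 (Xu_ext k) (cone3 U)"
  using radial_ext_C3 by (simp add: numeral_3_eq_3 numeral_2_eq_2)

lemma radial_ext_C2: "Ck_on 2 (radial_ext u) (cone3 U)"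
  using Ck_on_SucD[of 2 "radial_ext u" "cone3 U"] radial_ext_C3 by simp

lemma sph_ext_u_differentiable:
  assumes "y \<in> cone3 U"
  shows "sph_ext u differentiable at y" "pderiv3 (sph_ext u) i differentiable at y"
  using u_C3 assms differentiable_on_eq_differentiable_at[OF open_cone]
  unfolding sph_Ck_def Ck_on_3_iff by blast+

lemma Xu_ext_differentiable:
  assumes "y \<in> cone3 U"
  shows "Xu_ext k differentiable at y" "pderiv3 (Xu_ext k) j differentiable at y"
  using radial_ext_C3 assms differentiable_on_eq_differentiable_at[OF open_cone]
  unfolding Ck_on_3_iff by blast+

lemma Xu_ext_expand:
  assumes y: "y \<in> cone3 U"
  shows "Xu_ext k y = y$k * (1 / norm y) * sph_ext u y + norm y * pderiv3 (sph_ext u) k y"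
  unfolding radial_ext_def[abs_def]
  using pderiv3_mult[OF differentiable_norm_at[OF cone3_nonzero[OF y]] sph_ext_u_differentiable(1)[OF y]]
    pderiv3_norm[OF cone3_nonzero[OF y]] by simp

lemma pderiv3_sph_ext_u_normalize:
  assumes y: "y \<in> cone3 U"
  shows "pderiv3 (sph_ext u) k y = (1 / norm y) * pderiv3 (sph_ext u) k ((1 / norm y) *\<^sub>R y)"
proof (rule pderiv3_rescale[OF open_cone y])
  have "1 / norm y > 0" using cone3_nonzero[OF y] by simp
  then show "sph_ext u ((1 / norm y) *\<^sub>R z) = sph_ext u z" if "z \<in> cone3 U" for z
    using sph_ext_scaleR cone3_nonzero that by blast
  show "sph_ext u differentiable at ((1 / norm y) *\<^sub>R y)"
    using sph_ext_u_differentiable(1) cone3_scaleR[OF y \<open>1 / norm y > 0\<close>] by blast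
qed

lemma Xu_ext_eq_Xu:
  assumes y: "y \<in> cone3 U"
  shows "Xu_ext k y = Xu u ((1 / norm y) *\<^sub>R y) $ k"
proof -
  let ?z = "(1 / norm y) *\<^sub>R y"
  have ny: "norm y > 0" using cone3_nonzero[OF y] by simp
  have "Xu u ?z $ k = pderiv3 (sph_ext u) k ?z + u ?z * ?z $ k"
    unfolding Xu_def sgrad_def grad3_def by simp
  also have "u ?z = sph_ext u y" by (simp add: sph_ext_def)
  also have "pderiv3 (sph_ext u) k ?z = norm y * pderiv3 (sph_ext u) k y"
    using pderiv3_sph_ext_u_normalize[OF y, of k] ny by simp
  finally show ?thesis using Xu_ext_expand[OF y, of k] by (simp add: algebra_simps)
qed

lemma Xu_ext_scaleR:
  assumes y: "y \<in> cone3 U" and t: "t > 0"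
  shows "Xu_ext k (t *\<^sub>R y) = Xu_ext k y"
  using Xu_ext_eq_Xu[OF cone3_scaleR[OF y t]] Xu_ext_eq_Xu[OF y] cone3_nonzero[OF y] t by simp

lemma Xu_ext_commute: "y \<in> cone3 U \<Longrightarrow> pderiv3 (Xu_ext m) j y = pderiv3 (Xu_ext j) m y"
  by (rule pderiv3_commute[OF open_cone radial_ext_C2])

lemma Xu_ext_third_commute:
  assumes y: "y \<in> cone3 U"
  shows "pderiv3 (pderiv3 (Xu_ext m) i) k y = pderiv3 (pderiv3 (Xu_ext i) k) m y"
proof -
  have "pderiv3 (pderiv3 (Xu_ext m) i) k y = pderiv3 (pderiv3 (Xu_ext i) m) k y"
    by (rule pderiv3_cong[OF open_cone y]) (rule Xu_ext_commute)
  also have "\<dots> = pderiv3 (pderiv3 (Xu_ext i) k) m y"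
    by (rule pderiv3_commute[OF open_cone Xu_ext_C2 y])
  finally show ?thesis .
qed

lemma radial_hessian_symmetric:
  "y \<in> cone3 U \<Longrightarrow> transpose (hess3 (radial_ext u) y) = hess3 (radial_ext u) y"
  unfolding transpose_def hess3_def vec_eq_iff using Xu_ext_commute by simp

lemma radial_hessian_radial:
  assumes y: "y \<in> cone3 U"
  shows "hess3 (radial_ext u) y *v y = 0"
proof -
  have "(hess3 (radial_ext u) y *v y) $ j = (\<Sum>m\<in>UNIV. y$m * pderiv3 (Xu_ext j) m y)" for j
    unfolding matrix_vector_mult_def hess3_def using Xu_ext_commute[OF y] by (simp add: mult.commute)
  also have "\<dots> j = 0" for j
    using euler_zero_homogeneous[OF Xu_ext_differentiable(1)[OF y]] Xu_ext_scaleR[OF y] by blast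
  finally show ?thesis by (simp add: vec_eq_iff)
qed

lemma sph_ext_phi_E: "y \<in> cone3 U \<Longrightarrow> sph_ext (phi_E E u) y = (\<Sum>m\<in>UNIV. E$m * Xu_ext m y)"
  unfolding sph_ext_def[of "phi_E E u"] phi_E_def inner_vec_def using Xu_ext_eq_Xu by simp

lemma sph_ext_rho_u: "y \<in> cone3 U \<Longrightarrow> sph_ext (rho_u u) y = (\<Sum>m\<in>UNIV. Xu_ext m y * Xu_ext m y)"
  unfolding sph_ext_def[of "rho_u u"] rho_u_def power2_norm_eq_inner inner_vec_def
  using Xu_ext_eq_Xu by simp

lemma pderiv3_phi_E:
  assumes y: "y \<in> cone3 U"
  shows "pderiv3 (sph_ext (phi_E E u)) i y = (\<Sum>m\<in>UNIV. E$m * pderiv3 (Xu_ext m) i y)"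
proof -
  have "pderiv3 (sph_ext (phi_E E u)) i y = pderiv3 (\<lambda>z. \<Sum>m\<in>UNIV. E$m * Xu_ext m z) i y"
    by (rule pderiv3_cong[OF open_cone y]) (rule sph_ext_phi_E)
  also have "\<dots> = (\<Sum>m\<in>UNIV. E$m * pderiv3 (Xu_ext m) i y)"
    using Xu_ext_differentiable[OF y] by (simp add: pderiv3_sum pderiv3_cmult)
  finally show ?thesis .
qed

lemma pderiv3_pderiv3_phi_E:
  assumes y: "y \<in> cone3 U"
  shows "pderiv3 (pderiv3 (sph_ext (phi_E E u)) i) k y = (\<Sum>m\<in>UNIV. E$m * pderiv3 (pderiv3 (Xu_ext m) i) k y)"
proof -
  have "pderiv3 (pderiv3 (sph_ext (phi_E E u)) i) k y
      = pderiv3 (\<lambda>z. \<Sum>m\<in>UNIV. E$m * pderiv3 (Xu_ext m) i z) k y"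
    by (rule pderiv3_cong[OF open_cone y]) (rule pderiv3_phi_E)
  also have "\<dots> = (\<Sum>m\<in>UNIV. E$m * pderiv3 (pderiv3 (Xu_ext m) i) k y)"
    using Xu_ext_differentiable[OF y] by (simp add: pderiv3_sum pderiv3_cmult)
  finally show ?thesis .
qed

lemma pderiv3_rho_u:
  assumes y: "y \<in> cone3 U"
  shows "pderiv3 (sph_ext (rho_u u)) i y = (\<Sum>m\<in>UNIV. 2 * (Xu_ext m y * pderiv3 (Xu_ext m) i y))"
proof -
  have "pderiv3 (sph_ext (rho_u u)) i y = pderiv3 (\<lambda>z. \<Sum>m\<in>UNIV. Xu_ext m z * Xu_ext m z) i y"
    by (rule pderiv3_cong[OF open_cone y]) (rule sph_ext_rho_u)
  also have "\<dots> = (\<Sum>m\<in>UNIV. 2 * (Xu_ext m y * pderiv3 (Xu_ext m) i y))"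
    using Xu_ext_differentiable[OF y] by (simp add: pderiv3_sum pderiv3_mult)
  finally show ?thesis .
qed

lemma pderiv3_pderiv3_rho_u:
  assumes y: "y \<in> cone3 U"
  shows "pderiv3 (pderiv3 (sph_ext (rho_u u)) i) k y = (\<Sum>m\<in>UNIV.
     2 * (pderiv3 (Xu_ext m) k y * pderiv3 (Xu_ext m) i y + Xu_ext m y * pderiv3 (pderiv3 (Xu_ext m) i) k y))"
proof -
  have "pderiv3 (pderiv3 (sph_ext (rho_u u)) i) k y
      = pderiv3 (\<lambda>z. \<Sum>m\<in>UNIV. 2 * (Xu_ext m z * pderiv3 (Xu_ext m) i z)) k y"
    by (rule pderiv3_cong[OF open_cone y]) (rule pderiv3_rho_u)
  also have "\<dots> = (\<Sum>m\<in>UNIV.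
      2 * (pderiv3 (Xu_ext m) k y * pderiv3 (Xu_ext m) i y + Xu_ext m y * pderiv3 (pderiv3 (Xu_ext m) i) k y))"
    using Xu_ext_differentiable[OF y] by (simp add: pderiv3_sum pderiv3_cmult pderiv3_mult)
  finally show ?thesis .
qed

lemma pderiv3_Xu_ext_sphere:
  assumes x: "x \<in> U"
  shows "pderiv3 (Xu_ext i) k x = (if k = i then 1 else 0) * sph_ext u x - x$i * x$k * sph_ext u x
     + x$i * pderiv3 (sph_ext u) k x + x$k * pderiv3 (sph_ext u) i x + pderiv3 (pderiv3 (sph_ext u) i) k x"
proof -
  have xS: "x \<in> cone3 U" and nx: "norm x = 1" and x0: "x \<noteq> 0"
    using U_cone3[OF x] U_norm[OF x] by auto
  note g = sph_ext_u_differentiable[OF xS]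
  have dc: "(\<lambda>z::real^3. z $ i) differentiable at x"
    by (simp add: bounded_linear_imp_differentiable bounded_linear_vec_nth)
  have dinv: "(\<lambda>z::real^3. 1 / norm z) differentiable at x"
    by (rule differentiable_inverse_norm[OF x0])
  have dn: "(\<lambda>z::real^3. norm z) differentiable at x"
    by (rule differentiable_norm_at[OF x0])
  have d1: "(\<lambda>z::real^3. z$i * (1 / norm z)) differentiable at x"
    by (rule differentiable_mult[OF dc dinv])
  have "pderiv3 (Xu_ext i) k x
      = pderiv3 (\<lambda>z. z$i * (1 / norm z) * sph_ext u z + norm z * pderiv3 (sph_ext u) i z) k x"
    by (rule pderiv3_cong[OF open_cone xS])
      (rule Xu_ext_expand)
  also have "\<dots> = pderiv3 (\<lambda>z. z$i * (1 / norm z) * sph_ext u z) k x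
      + pderiv3 (\<lambda>z. norm z * pderiv3 (sph_ext u) i z) k x"
    by (rule pderiv3_add[OF differentiable_mult[OF d1 g(1)] differentiable_mult[OF dn g(2)]])
  also have "\<dots> = (pderiv3 (\<lambda>z::real^3. z $ i) k x * (1 / norm x)
        + x$i * pderiv3 (\<lambda>z::real^3. 1 / norm z) k x) * sph_ext u x
      + x$i * (1 / norm x) * pderiv3 (sph_ext u) k x
      + (pderiv3 (\<lambda>z::real^3. norm z) k x * pderiv3 (sph_ext u) i x
        + norm x * pderiv3 (pderiv3 (sph_ext u) i) k x)"
    by (simp only: pderiv3_mult[OF d1 g(1)] pderiv3_mult[OF dn g(2)] pderiv3_mult[OF dc dinv])
  finally show ?thesis
    unfolding pderiv3_component pderiv3_inverse_norm[OF x0] pderiv3_norm[OF x0] nx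
    by (simp add: algebra_simps)
qed

lemma sgrad_phi_E:
  "x \<in> U \<Longrightarrow> sgrad (phi_E E u) x = hess3 (radial_ext u) x *v E"
  unfolding sgrad_def grad3_def hess3_def vec_eq_iff matrix_vector_mult_def
  using pderiv3_phi_E[OF U_cone3] by (simp add: mult.commute)

lemma sgrad_rho_u:
  assumes x: "x \<in> U"
  shows "sgrad (rho_u u) x = 2 *\<^sub>R (hess3 (radial_ext u) x *v Xu u x)"
proof -
  have "Xu_ext m x = Xu u x $ m" for m
    using Xu_ext_eq_Xu[OF U_cone3[OF x]] U_norm[OF x] by simp
  then show ?thesis
    unfolding sgrad_def grad3_def hess3_def vec_eq_iff matrix_vector_mult_def
    using pderiv3_rho_u[OF U_cone3[OF x]]
    by (simp add: sum_distrib_left algebra_simps)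
qed

context
  fixes A :: "real^3 \<Rightarrow> real^3^3"
  assumes A_sym: "\<forall>x\<in>U. transpose (A x) = A x \<and> A x *v x = 0"
    and A_C1: "\<forall>i j. sph_Ck 1 (\<lambda>x. A x $ i $ j) U"
    and u_eq: "\<forall>x\<in>U. Fop A u x + u x * trace (A x) = 0"
begin

abbreviation "A_ext i k \<equiv> sph_ext (\<lambda>x. A x $ i $ k)"

lemma A_ext_differentiable:
  assumes "y \<in> cone3 U"
  shows "A_ext i k differentiable at y"
proof -
  have "A_ext i k differentiable_on cone3 U"
    using A_C1 unfolding sph_Ck_def by simp
  then show ?thesis
    using differentiable_on_eq_differentiable_at[OF open_cone] assms by blast
qed

lemma A_ext_radial:
  assumes x: "x \<in> U"
  shows "grad3 (A_ext i k) x \<bullet> x = 0"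
proof -
  have "(\<Sum>m\<in>UNIV. x$m * pderiv3 (A_ext i k) m x) = 0"
    using cone3_nonzero[OF U_cone3[OF x]]
    by (intro euler_zero_homogeneous[OF A_ext_differentiable[OF U_cone3[OF x]]] sph_ext_scaleR)
  then show ?thesis by (simp add: grad3_def inner_vec_def mult.commute)
qed

lemma trace_hessian_sphere:
  assumes x: "x \<in> U"
  shows "(\<Sum>i\<in>UNIV. \<Sum>k\<in>UNIV. A x $ i $ k * pderiv3 (Xu_ext i) k x) = Fop A u x + u x * trace (A x)"
proof -
  have "(A x *v x) $ i = 0" for i
    using A_sym x by simp
  then have row: "(\<Sum>k\<in>UNIV. A x $ i $ k * x $ k) = 0" for i
    by (simp add: matrix_vector_mult_def)
  have "transpose (A x) $ i $ k = A x $ i $ k" for i k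
    using A_sym x by simp
  then have col: "(\<Sum>i\<in>UNIV. A x $ i $ k * x $ i) = 0" for k
    using row[of k] by (simp add: transpose_def)
  let ?g = "sph_ext u x" and ?dg = "\<lambda>k. pderiv3 (sph_ext u) k x"
  have "(\<Sum>i\<in>UNIV. \<Sum>k\<in>UNIV. A x $ i $ k * pderiv3 (Xu_ext i) k x)
    = (\<Sum>i\<in>UNIV. \<Sum>k\<in>UNIV. A x $ i $ k * ((if k = i then 1 else 0) * ?g))
    - (\<Sum>i\<in>UNIV. (x$i * ?g) * (\<Sum>k\<in>UNIV. A x $ i $ k * x$k))
    + (\<Sum>k\<in>UNIV. ?dg k * (\<Sum>i\<in>UNIV. A x $ i $ k * x$i))
    + (\<Sum>i\<in>UNIV. ?dg i * (\<Sum>k\<in>UNIV. A x $ i $ k * x$k))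
    + (\<Sum>i\<in>UNIV. \<Sum>k\<in>UNIV. A x $ i $ k * pderiv3 (pderiv3 (sph_ext u) i) k x)"
    unfolding pderiv3_Xu_ext_sphere[OF x] by (simp add: sum_3 algebra_simps)
  also have "\<dots> = ?g * trace (A x) + Fop A u x"
    unfolding row col Fop_eq_sum by (simp add: sum_3 trace_def algebra_simps)
  finally show ?thesis
    using sph_ext_sphere[OF U_norm[OF x]] by simp
qed

lemma trace_hessian_cone:
  assumes y: "y \<in> cone3 U"
  shows "(\<Sum>i\<in>UNIV. \<Sum>k\<in>UNIV. A_ext i k y * pderiv3 (Xu_ext i) k y) = 0"
proof -
  let ?z = "(1 / norm y) *\<^sub>R y"
  have z: "?z \<in> U" "?z \<in> cone3 U" and ny: "norm y > 0"
    using cone3_normalize[OF y] U_cone3 cone3_nonzero[OF y] by auto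
  have "pderiv3 (Xu_ext i) k y = (1 / norm y) * pderiv3 (Xu_ext i) k ?z" for i k
    using Xu_ext_scaleR ny Xu_ext_differentiable(1)[OF z(2)]
    by (intro pderiv3_rescale[OF open_cone y]) auto
  then have "(\<Sum>i\<in>UNIV. \<Sum>k\<in>UNIV. A_ext i k y * pderiv3 (Xu_ext i) k y)
     = (1 / norm y) * (\<Sum>i\<in>UNIV. \<Sum>k\<in>UNIV. A ?z $ i $ k * pderiv3 (Xu_ext i) k ?z)"
    by (simp add: sph_ext_def sum_distrib_left algebra_simps)
  also have "\<dots> = 0"
    unfolding trace_hessian_sphere[OF z(1)] using u_eq z(1) by simp
  finally show ?thesis .
qed

lemma trace_hessian_derivative:
  assumes x: "x \<in> U"
  shows "(\<Sum>i\<in>UNIV. \<Sum>k\<in>UNIV. A x $ i $ k * pderiv3 (pderiv3 (Xu_ext i) k) m x)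
    = - (\<Sum>i\<in>UNIV. \<Sum>k\<in>UNIV. pderiv3 (A_ext i k) m x * pderiv3 (Xu_ext i) k x)"
proof -
  have xS: "x \<in> cone3 U" using U_cone3[OF x] .
  have "0 = pderiv3 (\<lambda>z. 0) m x" by (simp add: pderiv3_const)
  also have "\<dots> = pderiv3 (\<lambda>z. \<Sum>i\<in>UNIV. \<Sum>k\<in>UNIV. A_ext i k z * pderiv3 (Xu_ext i) k z) m x"
    by (rule pderiv3_cong[OF open_cone xS]) (simp add: trace_hessian_cone)
  also have "\<dots> = (\<Sum>i\<in>UNIV. \<Sum>k\<in>UNIV. pderiv3 (A_ext i k) m x * pderiv3 (Xu_ext i) k x
      + A_ext i k x * pderiv3 (pderiv3 (Xu_ext i) k) m x)"
    using A_ext_differentiable[OF xS] Xu_ext_differentiable[OF xS]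
    by (simp add: pderiv3_sum pderiv3_mult)
  finally show ?thesis
    using sph_ext_sphere[OF U_norm[OF x]] by (simp add: sum.distrib eq_neg_iff_add_eq_0)
qed

lemma hessian_trace_zero:
  "x \<in> U \<Longrightarrow> (\<Sum>i\<in>UNIV. \<Sum>k\<in>UNIV. A x $ i $ k * hess3 (radial_ext u) x $ k $ i) = 0"
  using trace_hessian_sphere u_eq by (simp add: hess3_def)

lemma Fop_phi_E:
  assumes x: "x \<in> U"
  shows "Fop A (phi_E E u) x
    = - (\<Sum>i\<in>UNIV. \<Sum>k\<in>UNIV. (E \<bullet> grad3 (A_ext i k) x) * hess3 (radial_ext u) x $ k $ i)"
proof -
  have xS: "x \<in> cone3 U" using U_cone3[OF x] .
  have "Fop A (phi_E E u) x = (\<Sum>i\<in>UNIV. \<Sum>k\<in>UNIV. A x $ i $ k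
      * (\<Sum>m\<in>UNIV. E$m * pderiv3 (pderiv3 (Xu_ext i) k) m x))"
    unfolding Fop_eq_sum pderiv3_pderiv3_phi_E[OF xS] Xu_ext_third_commute[OF xS] ..
  also have "\<dots> = (\<Sum>m\<in>UNIV. E$m * (\<Sum>i\<in>UNIV. \<Sum>k\<in>UNIV. A x $ i $ k * pderiv3 (pderiv3 (Xu_ext i) k) m x))"
    by (simp add: sum_3 algebra_simps)
  also have "\<dots> = - (\<Sum>i\<in>UNIV. \<Sum>k\<in>UNIV. (E \<bullet> grad3 (A_ext i k) x) * hess3 (radial_ext u) x $ k $ i)"
    unfolding trace_hessian_derivative[OF x]
    by (simp add: grad3_def hess3_def inner_vec_def sum_3 algebra_simps)
  finally show ?thesis .
qed

lemma Fop_rho_u: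
  assumes x: "x \<in> U"
  shows "Fop A (rho_u u) x
    = - 2 * (\<Sum>i\<in>UNIV. \<Sum>k\<in>UNIV. (Xu u x \<bullet> grad3 (A_ext i k) x) * hess3 (radial_ext u) x $ k $ i)
      + 2 * (\<Sum>m\<in>UNIV. column m (hess3 (radial_ext u) x) \<bullet> (A x *v column m (hess3 (radial_ext u) x)))"
proof -
  have xS: "x \<in> cone3 U" using U_cone3[OF x] .
  have X: "Xu_ext m x = Xu u x $ m" for m
    using Xu_ext_eq_Xu[OF xS] U_norm[OF x] by simp
  have "Fop A (rho_u u) x = 2 * (\<Sum>m\<in>UNIV. Xu_ext m x
        * (\<Sum>i\<in>UNIV. \<Sum>k\<in>UNIV. A x $ i $ k * pderiv3 (pderiv3 (Xu_ext i) k) m x))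
      + 2 * (\<Sum>m\<in>UNIV. \<Sum>i\<in>UNIV. pderiv3 (Xu_ext m) i x * (\<Sum>k\<in>UNIV. A x $ i $ k * pderiv3 (Xu_ext m) k x))"
    unfolding Fop_eq_sum pderiv3_pderiv3_rho_u[OF xS] Xu_ext_third_commute[OF xS]
    by (simp add: sum_3 algebra_simps)
  also have "\<dots> = - 2 * (\<Sum>i\<in>UNIV. \<Sum>k\<in>UNIV. (Xu u x \<bullet> grad3 (A_ext i k) x) * hess3 (radial_ext u) x $ k $ i)
      + 2 * (\<Sum>m\<in>UNIV. column m (hess3 (radial_ext u) x) \<bullet> (A x *v column m (hess3 (radial_ext u) x)))"
    unfolding trace_hessian_derivative[OF x] X
    by (simp add: grad3_def hess3_def column_def inner_vec_def matrix_vector_mult_def sum_3 algebra_simps)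
  finally show ?thesis .
qed

lemma hessian_inequalities:
  assumes x: "x \<in> U" and ell: "elliptic_on_tangent lam Lam (A x) x" and lam: "0 < lam"
    and K: "\<And>i k m. \<bar>pderiv3 (A_ext i k) m x\<bar> \<le> K"
  shows "Fop A (rho_u u) x \<ge> - (27 * K * (3 + 2 * Lam / lam)) * norm (sgrad (rho_u u) x)"
    and "Fop A (phi_E E u) x \<ge> - (27 * K * (3 + 2 * Lam / lam)) * norm (sgrad (phi_E E u) x)"
proof -
  let ?H = "hess3 (radial_ext u) x" and ?C = "27 * K * (3 + 2 * Lam / lam)"
  have xS: "x \<in> cone3 U" and nx: "norm x = 1" using U_cone3[OF x] U_norm[OF x] .
  have H: "transpose ?H = ?H" "?H *v x = 0"
    using radial_hessian_symmetric[OF xS] radial_hessian_radial[OF xS] .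
  have bound: "\<bar>\<Sum>i\<in>UNIV. \<Sum>k\<in>UNIV. (c \<bullet> grad3 (A_ext i k) x) * ?H$k$i\<bar> \<le> ?C * norm (?H *v c)" for c
    using A_sym x hessian_trace_zero[OF x] ell lam A_ext_radial[OF x] K
    by (intro tangent_contraction_bound[OF nx H]) (auto simp: grad3_def)
  have "column m ?H \<bullet> x = (transpose ?H *v x) $ m" for m
    by (simp add: column_def transpose_def matrix_vector_mult_def inner_vec_def mult.commute)
  then have "column m ?H \<bullet> x = 0" for m
    using H by simp
  then have "lam * (norm (column m ?H))\<^sup>2 \<le> column m ?H \<bullet> (A x *v column m ?H)" for m
    using ell unfolding elliptic_on_tangent_def by blast
  then have "0 \<le> column m ?H \<bullet> (A x *v column m ?H)" for m
    using lam by (meson order_trans mult_nonneg_nonneg less_imp_le zero_le_power2)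
  then have "0 \<le> (\<Sum>m\<in>UNIV. column m ?H \<bullet> (A x *v column m ?H))"
    by (rule sum_nonneg)
  then have "Fop A (rho_u u) x \<ge> - 2 * (?C * norm (?H *v Xu u x))"
    unfolding Fop_rho_u[OF x] using bound[of "Xu u x", unfolded abs_le_iff] by linarith
  then show "Fop A (rho_u u) x \<ge> - ?C * norm (sgrad (rho_u u) x)"
    unfolding sgrad_rho_u[OF x] by simp
  show "Fop A (phi_E E u) x \<ge> - ?C * norm (sgrad (phi_E E u) x)"
    unfolding Fop_phi_E[OF x] sgrad_phi_E[OF x] using conjunct1[OF bound[of E, unfolded abs_le_iff]] by simp
qed

end

end

theorem lemma2:
  fixes lam Lam K :: real
  assumes "0 < lam" and "lam \<le> Lam"
  shows "\<exists>C1 C2 :: real. \<forall>(U :: (real^3) set) (A :: real^3 \<Rightarrow> real^3^3) (u :: real^3 \<Rightarrow> real).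
    (U \<subseteq> sphere 0 1 \<and> openin (top_of_set (sphere 0 1)) U
     \<and> (\<forall>x\<in>U. transpose (A x) = A x \<and> A x *v x = 0)
     \<and> (\<forall>i j. sph_Ck 1 (\<lambda>x. A x $ i $ j) U)
     \<and> (\<forall>x\<in>U. \<forall>\<xi>. \<xi> \<bullet> x = 0 \<longrightarrow>
           lam * (norm \<xi>)\<^sup>2 \<le> \<xi> \<bullet> (A x *v \<xi>) \<and> \<xi> \<bullet> (A x *v \<xi>) \<le> Lam * (norm \<xi>)\<^sup>2)
     \<and> (\<forall>x\<in>U. \<forall>i j. \<bar>A x $ i $ j\<bar> \<le> K
           \<and> (\<forall>k. \<bar>pderiv3 (sph_ext (\<lambda>y. A y $ i $ j)) k x\<bar> \<le> K))
     \<and> sph_Ck 3 u U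
     \<and> (\<forall>x\<in>U. Fop A u x + u x * trace (A x) = 0))
    \<longrightarrow> (\<forall>x\<in>U. \<forall>E :: real^3. norm E = 1 \<longrightarrow>
          Fop A (rho_u u) x \<ge> - C1 * norm (sgrad (rho_u u) x)
        \<and> Fop A (phi_E E u) x \<ge> - C2 * norm (sgrad (phi_E E u) x))"
  by (intro exI[of _ "27 * K * (3 + 2 * Lam / lam)"] allI impI ballI conjI; elim conjE;
      rule hessian_inequalities) (auto simp: elliptic_on_tangent_def assms(1))

end
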